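(* Let $U$ be any finite set in a commutative group $G$ and $1<p<\infty$. Then \[ \beta_p(U)=\gamma_p(1_U),\qquad \beta'(U)=\gamma'(1_U),\qquad \beta''(U)=\gamma''(1_U). \]
   Context: Set functionals (with $A,B$ ranging over nonempty finite subsets of $G$): $\beta_p(U)=\inf_{A,B}\frac{|A+B+U|}{|A|^{1/p}|B|^{1-1/p}}$; $\beta'(U)=\inf_{A,B,|A|=|B|}\frac{|A+B+U|}{\sqrt{|A||B|}}$; $\beta''(U)=\inf_A\frac{|A+A+U|}{|A|}$. Functional versions: for nonnegative functions $f,g$ on $G$, the max-convolution is $(f\star g)(x)=\max_t f(t)g(x-t)$. For $t>0$ the level set of $f$ is $\{x: f(x)\ge t\}$ and its distribution function is $F(t)=|\{x:f(x)\ge t\}|$; $f\sim g$ (identically distributed) means their distribution functions coincide. For nonnegative $f\in\ell^1(G)$ and $q$ with $1/p+1/q=1$, with $g,h$ ranging over nonzero nonnegative functions in $\ell^1(G)$: $\gamma_p(f)=\inf_{g,h}\frac{\|f\star g\star h\|_1}{\|g\|_p\|h\|_q}$; $\gamma'(f)=\inf_{g\sim h}\frac{\|f\star g\star h\|_1}{\|g\|_2\|h\|_2}$; $\gamma''(f)=\inf_g\frac{\|f\star g\star g\|_1}{\|g\|_2^2}$. $1_U$ is the indicator function of $U$. *)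

theory Defs
  imports "HOL-Analysis.Analysis"
begin

definition sumset :: "'a::ab_group_add set \<Rightarrow> 'a set \<Rightarrow> 'a set" where
  "sumset A B = {a + b | a b. a \<in> A \<and> b \<in> B}"

definition beta_p :: "real \<Rightarrow> 'a::ab_group_add set \<Rightarrow> real" where
  "beta_p p U = Inf {real (card (sumset (sumset A B) U)) /
      (real (card A) powr (1/p) * real (card B) powr (1 - 1/p)) | A B.
      finite A \<and> A \<noteq> {} \<and> finite B \<and> B \<noteq> {}}"

definition beta' :: "'a::ab_group_add set \<Rightarrow> real" where
  "beta' U = Inf {real (card (sumset (sumset A B) U)) / sqrt (real (card A) * real (card B)) | A B.
      finite A \<and> A \<noteq> {} \<and> finite B \<and> B \<noteq> {} \<and> card A = card B}"

definition beta'' :: "'a::ab_group_add set \<Rightarrow> real" where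
  "beta'' U = Inf {real (card (sumset (sumset A A) U)) / real (card A) | A.
      finite A \<and> A \<noteq> {}}"

text \<open>Max-convolution; for nonnegative l1 functions the supremum is attained (a maximum).\<close>
definition maxconv :: "('a::ab_group_add \<Rightarrow> real) \<Rightarrow> ('a \<Rightarrow> real) \<Rightarrow> 'a \<Rightarrow> real" where
  "maxconv f g x = (SUP t. f t * g (x - t))"

definition norm1 :: "('a \<Rightarrow> real) \<Rightarrow> real" where
  "norm1 f = infsum f UNIV"

definition lpnorm :: "real \<Rightarrow> ('a \<Rightarrow> real) \<Rightarrow> real" where
  "lpnorm p g = (infsum (\<lambda>x. g x powr p) UNIV) powr (1/p)"

definition admissible :: "('a \<Rightarrow> real) \<Rightarrow> bool" where
  "admissible g \<longleftrightarrow> (\<forall>x. 0 \<le> g x) \<and> g summable_on UNIV \<and> g \<noteq> (\<lambda>_. 0)"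

definition ident_distrib :: "('a \<Rightarrow> real) \<Rightarrow> ('a \<Rightarrow> real) \<Rightarrow> bool" where
  "ident_distrib g h \<longleftrightarrow> (\<forall>t>0. card {x. t \<le> g x} = card {x. t \<le> h x})"

definition gamma_p :: "real \<Rightarrow> ('a::ab_group_add \<Rightarrow> real) \<Rightarrow> real" where
  "gamma_p p f = (let q = p / (p - 1) in
     Inf {norm1 (maxconv (maxconv f g) h) / (lpnorm p g * lpnorm q h) | g h.
          admissible g \<and> admissible h})"

definition gamma' :: "('a::ab_group_add \<Rightarrow> real) \<Rightarrow> real" where
  "gamma' f = Inf {norm1 (maxconv (maxconv f g) h) / (lpnorm 2 g * lpnorm 2 h) | g h.
          admissible g \<and> admissible h \<and> ident_distrib g h}"

definition gamma'' :: "('a::ab_group_add \<Rightarrow> real) \<Rightarrow> real" where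
  "gamma'' f = Inf {norm1 (maxconv (maxconv f g) g) / (lpnorm 2 g) ^ 2 | g. admissible g}"

end

theory Submission
  imports Defs
begin

text \<open>Indicators of finite nonempty sets are admissible, identically distributed when the sets have
  equal size, and max-convolve to indicators of sumsets; hence every quotient in the definition of
  a set functional \<beta> also occurs in the corresponding \<gamma>, and \<gamma> \<le> \<beta>.

  Conversely let F = 1_U \<star> g \<star> h. Since F(a + b + u) \<ge> g(a) h(b), F is at least g_i h_j on
  A_i + B_j + U, where A_i and B_j consist of the points carrying the i largest values g_1 \<ge> g_2 \<ge> ...
  of g and the j largest values h_1 \<ge> h_2 \<ge> ... of h; by definition of \<beta>_p this sumset has at
  least \<beta>_p i^(1/p) j^(1/q) elements. After truncating g and h to finite level sets, a discrete
  transport argument turns these layer bounds into |F|_1 \<ge> \<beta>_p |g|_p |h|_q: the normalised masses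
  g_i^p / |g|_p^p and h_j^q / |h|_q^q are spent at the same rate along a monotone staircase through
  the grid of pairs (i, j), and the concavity and 1-homogeneity of (u, v) \<mapsto> u^(1/p) v^(1/q) show
  that each unit of mass is paid for by F. For \<beta>' and \<beta>'' the functions g and h are identically
  distributed, so g_i = h_i and only the diagonal i = j of the grid is needed.\<close>

section \<open>Weighted geometric means\<close>

definition geom_mean :: "real \<Rightarrow> real \<Rightarrow> real \<Rightarrow> real" where
  "geom_mean r u v = u powr r * v powr (1 - r)"

lemma geom_mean_nonneg: "0 \<le> geom_mean r u v"
  by (simp add: geom_mean_def)

lemma geom_mean_commute: "geom_mean (1 - r) v u = geom_mean r u v"
  by (simp add: geom_mean_def mult.commute)

lemma geom_mean_same: "0 \<le> d \<Longrightarrow> geom_mean r d d = d"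
  by (cases "d = 0") (simp_all add: geom_mean_def powr_add[symmetric])

lemma geom_mean_mult:
  "0 \<le> u \<Longrightarrow> 0 \<le> v \<Longrightarrow> 0 \<le> x \<Longrightarrow> 0 \<le> y \<Longrightarrow>
    geom_mean r u v * geom_mean r x y = geom_mean r (u * x) (v * y)"
  by (simp add: geom_mean_def powr_mult)

lemma geom_mean_mono:
  "0 \<le> r \<Longrightarrow> r \<le> 1 \<Longrightarrow> 0 \<le> u \<Longrightarrow> u \<le> u' \<Longrightarrow> 0 \<le> v \<Longrightarrow> v \<le> v' \<Longrightarrow>
    geom_mean r u v \<le> geom_mean r u' v'"
  unfolding geom_mean_def by (intro mult_mono powr_mono2) auto

lemma geom_mean_le_weighted_mean:
  assumes "0 < r" "r < 1" "0 \<le> u" "0 \<le> v"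
  shows "geom_mean r u v \<le> r * u + (1 - r) * v"
proof (cases "u = 0 \<or> v = 0")
  case True
  then show ?thesis using assms by (auto simp: geom_mean_def)
next
  case False
  then show ?thesis using Youngs_inequality_0[of r "1 - r" u v] assms by (simp add: geom_mean_def)
qed

lemma geom_mean_superadditive:
  assumes r: "0 < r" "r < 1" and nonneg: "0 \<le> u" "0 \<le> v" "0 \<le> x" "0 \<le> y"
  shows "geom_mean r u v + geom_mean r x y \<le> geom_mean r (u + x) (v + y)"
proof (cases "u + x = 0 \<or> v + y = 0")
  case True
  then have "(u = 0 \<and> x = 0) \<or> (v = 0 \<and> y = 0)" using nonneg by auto
  then show ?thesis using r by (auto simp: geom_mean_def)
next
  case False
  define U V where "U = u + x" and "V = v + y"
  have U: "0 < U" and V: "0 < V" using False nonneg by (auto simp: U_def V_def)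
  define K where "K = geom_mean r U V"
  have K: "0 \<le> K" by (simp add: K_def geom_mean_nonneg)
  have scaled: "geom_mean r s t = K * geom_mean r (s / U) (t / V)" if "0 \<le> s" "0 \<le> t" for s t
    using geom_mean_mult[of U V "s / U" "t / V" r] U V that by (simp add: K_def)
  have "geom_mean r u v + geom_mean r x y
      \<le> K * (r * (u / U) + (1 - r) * (v / V)) + K * (r * (x / U) + (1 - r) * (y / V))"
    unfolding scaled[OF nonneg(1,2)] scaled[OF nonneg(3,4)]
    using U V nonneg r K by (intro add_mono mult_left_mono geom_mean_le_weighted_mean) auto
  also have "\<dots> = K * (r * ((u + x) / U) + (1 - r) * ((v + y) / V))"
    by (simp add: add_divide_distrib algebra_simps)
  also have "\<dots> = K" using U V by (simp add: U_def V_def)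
  finally show ?thesis by (simp add: K_def U_def V_def)
qed

lemma geom_mean_gain:
  assumes r: "0 < r" "r < 1" and pos: "0 < a" "0 < c" and nonneg: "0 \<le> u" "0 \<le> v" "0 \<le> \<delta>"
  shows "geom_mean r a c * geom_mean r u v + \<delta> \<le> geom_mean r a c * geom_mean r (u + \<delta> / a) (v + \<delta> / c)"
proof -
  have "geom_mean r a c * geom_mean r (\<delta> / a) (\<delta> / c) = \<delta>"
    using pos nonneg by (simp add: geom_mean_mult geom_mean_same)
  moreover have "geom_mean r u v + geom_mean r (\<delta> / a) (\<delta> / c) \<le> geom_mean r (u + \<delta> / a) (v + \<delta> / c)"
    using r pos nonneg by (intro geom_mean_superadditive) auto
  ultimately show ?thesis
    using mult_left_mono[OF _ geom_mean_nonneg[of r a c]] by (metis distrib_left)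
qed

lemma geom_mean_normalized:
  assumes "0 \<le> x" "0 \<le> y" "0 < P" "0 < Q" "0 < p" "0 < q" "1/p + 1/q = 1"
  shows "P powr (1/p) * Q powr (1/q) * geom_mean (1/p) (x powr p / P) (y powr q / Q) = x * y"
proof -
  have "(x powr p / P) powr (1/p) = x / P powr (1/p)" "(y powr q / Q) powr (1/q) = y / Q powr (1/q)"
    using assms by (simp_all add: powr_divide powr_powr)
  moreover have "1 - 1/p = 1/q" using assms(7) by simp
  ultimately show ?thesis using assms(3,4) by (simp add: geom_mean_def)
qed

section \<open>Layered sums and the staircase transport inequality\<close>

lemma sum_Diff_ge_layer:
  fixes F :: "'a \<Rightarrow> real"
  assumes "finite T" "S0 \<subseteq> S1" "S1 \<subseteq> T" "\<And>x. x \<in> S1 \<Longrightarrow> l \<le> F x"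
  shows "l * (real (card S1) - real (card S0)) + (\<Sum>x\<in>T - S1. F x) \<le> (\<Sum>x\<in>T - S0. F x)"
proof -
  have fin: "finite S1" using assms finite_subset by blast
  have "T - S0 = (S1 - S0) \<union> (T - S1)" using assms by blast
  then have "(\<Sum>x\<in>T - S0. F x) = (\<Sum>x\<in>S1 - S0. F x) + (\<Sum>x\<in>T - S1. F x)"
    using assms fin by (simp add: sum.union_disjoint Diff_Int_distrib2 Int_Diff)
  moreover have "real (card (S1 - S0)) * l \<le> (\<Sum>x\<in>S1 - S0. F x)"
    by (rule sum_bounded_below) (use assms in auto)
  moreover have "real (card (S1 - S0)) = real (card S1) - real (card S0)"
    using assms fin by (simp add: card_Diff_subset finite_subset card_mono of_nat_diff)
  ultimately show ?thesis by (simp add: mult.commute)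
qed

lemma nested_sum_lower_bound:
  fixes F :: "'a \<Rightarrow> real" and S :: "nat \<Rightarrow> 'a set" and w :: "nat \<Rightarrow> real" and b :: real
  assumes F_nonneg: "\<And>x. 0 \<le> F x" and finite: "\<And>i. finite (S i)" and mono: "\<And>i. S i \<subseteq> S (Suc i)"
    and F_ge: "\<And>i x. i \<le> m \<Longrightarrow> x \<in> S i \<Longrightarrow> w i \<le> F x"
    and card_ge: "\<And>i. i \<le> m \<Longrightarrow> b * Suc i \<le> card (S i)"
    and w_antimono: "\<And>i. i < m \<Longrightarrow> w (Suc i) \<le> w i" and w_nonneg: "\<And>i. i \<le> m \<Longrightarrow> 0 \<le> w i"
  shows "b * (\<Sum>i\<le>m. w i) \<le> (\<Sum>x\<in>S m. F x)"
proof -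
  \<comment> \<open>Abel summation: the surplus of S k over b (k + 1) is carried along with weight w k.\<close>
  have key: "b * (\<Sum>i\<le>k. w i) + w k * (card (S k) - b * Suc k) \<le> (\<Sum>x\<in>S k. F x)" if "k \<le> m" for k
    using that
  proof (induction k)
    case 0
    have "card (S 0) * w 0 \<le> (\<Sum>x\<in>S 0. F x)" using F_ge by (intro sum_bounded_below) auto
    then show ?case by (simp add: algebra_simps)
  next
    case (Suc k)
    have "(\<Sum>x\<in>S (Suc k). F x) = (\<Sum>x\<in>S (Suc k) - S k. F x) + (\<Sum>x\<in>S k. F x)"
      using finite mono by (intro sum.subset_diff)
    moreover have "card (S (Suc k) - S k) * w (Suc k) \<le> (\<Sum>x\<in>S (Suc k) - S k. F x)"
      using F_ge Suc.prems by (intro sum_bounded_below) auto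
    moreover have "card (S (Suc k) - S k) = real (card (S (Suc k))) - card (S k)"
      using finite mono by (simp add: card_Diff_subset card_mono of_nat_diff)
    moreover have "w (Suc k) * (card (S k) - b * Suc k) \<le> w k * (card (S k) - b * Suc k)"
      using card_ge[of k] w_antimono[of k] Suc.prems by (intro mult_right_mono) auto
    ultimately show ?case using Suc by (simp add: algebra_simps)
  qed
  moreover have "0 \<le> w m * (card (S m) - b * Suc m)" using card_ge w_nonneg by simp
  ultimately show ?thesis using key[OF order_refl] by linarith
qed

definition progress :: "(nat \<Rightarrow> real) \<Rightarrow> nat \<Rightarrow> real \<Rightarrow> real" where
  "progress w i \<rho> = real (Suc i) - \<rho> / w i"

lemma progress_bounds:
  "0 < w i \<Longrightarrow> 0 \<le> \<rho> \<Longrightarrow> \<rho> \<le> w i \<Longrightarrow> real i \<le> progress w i \<rho> \<and> progress w i \<rho> \<le> real (Suc i)"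
  by (simp add: progress_def field_simps)

lemma progress_full: "0 < w i \<Longrightarrow> progress w i (w i) = real i"
  by (simp add: progress_def)

lemma progress_spend: "0 < w i \<Longrightarrow> progress w i (\<rho> - \<delta>) = progress w i \<rho> + \<delta> / w i"
  by (simp add: progress_def diff_divide_distrib)

text \<open>Row i carries mass \<alpha> i and column j mass \<beta> j, with equal totals. A state records the
  current cell (i, j), the masses \<rho> and \<sigma> still unspent in row i and column j (so that the
  position reached in the grid is (progress \<alpha> i \<rho>, progress \<beta> j \<sigma>)), and the part S0 of
  S i j whose values of F have already been used. The invariant tail_bound says that F outside S0
  pays for the remaining mass at rate b C, up to the surplus of S0 over the bound guaranteed at the
  current position. Spending mass moves the position towards the next row or column and, by
  geom_mean_gain, raises the guaranteed bound by at least what has to be paid.\<close>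
locale staircase =
  fixes F :: "'a \<Rightarrow> real" and S :: "nat \<Rightarrow> nat \<Rightarrow> 'a set"
    and \<alpha> \<beta> :: "nat \<Rightarrow> real" and m n :: nat and r b C :: real
  assumes r_bounds: "0 < r" "r < 1"
    and F_nonneg: "\<And>x. 0 \<le> F x"
    and finite_S: "\<And>i j. finite (S i j)"
    and S_mono: "\<And>i j i' j'. i \<le> i' \<Longrightarrow> j \<le> j' \<Longrightarrow> S i j \<subseteq> S i' j'"
    and F_ge: "\<And>i j x. i < m \<Longrightarrow> j < n \<Longrightarrow> x \<in> S i j \<Longrightarrow> C * geom_mean r (\<alpha> i) (\<beta> j) \<le> F x"
    and card_S_ge: "\<And>i j. i < m \<Longrightarrow> j < n \<Longrightarrow> b * geom_mean r (Suc i) (Suc j) \<le> card (S i j)"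
    and \<alpha>_pos: "\<And>i. i < m \<Longrightarrow> 0 < \<alpha> i"
    and \<alpha>_antimono: "\<And>i i'. i \<le> i' \<Longrightarrow> i' < m \<Longrightarrow> \<alpha> i' \<le> \<alpha> i"
    and \<beta>_pos: "\<And>j. j < n \<Longrightarrow> 0 < \<beta> j"
    and \<beta>_antimono: "\<And>j j'. j \<le> j' \<Longrightarrow> j' < n \<Longrightarrow> \<beta> j' \<le> \<beta> j"
    and b_nonneg: "0 \<le> b" and C_nonneg: "0 \<le> C"
begin

definition valid_state :: "nat \<Rightarrow> nat \<Rightarrow> real \<Rightarrow> real \<Rightarrow> 'a set \<Rightarrow> bool" where
  "valid_state i j \<rho> \<sigma> S0 \<longleftrightarrow> i < m \<and> j < n \<and> 0 \<le> \<rho> \<and> \<rho> \<le> \<alpha> i \<and> 0 \<le> \<sigma> \<and> \<sigma> \<le> \<beta> j \<and>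
     \<rho> + (\<Sum>i'\<in>{Suc i..<m}. \<alpha> i') = \<sigma> + (\<Sum>j'\<in>{Suc j..<n}. \<beta> j') \<and>
     S0 \<subseteq> S i j \<and> b * geom_mean r (progress \<alpha> i \<rho>) (progress \<beta> j \<sigma>) \<le> card S0"

definition tail_bound :: "nat \<Rightarrow> nat \<Rightarrow> real \<Rightarrow> real \<Rightarrow> 'a set \<Rightarrow> bool" where
  "tail_bound i j \<rho> \<sigma> S0 \<longleftrightarrow>
     b * C * (\<rho> + (\<Sum>i'\<in>{Suc i..<m}. \<alpha> i'))
       - C * geom_mean r (\<alpha> i) (\<beta> j) * (card S0 - b * geom_mean r (progress \<alpha> i \<rho>) (progress \<beta> j \<sigma>))
     \<le> (\<Sum>x\<in>S (m - 1) (n - 1) - S0. F x)"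

lemma transpose: "staircase F (\<lambda>i j. S j i) \<beta> \<alpha> n m (1 - r) b C"
proof unfold_locales
  show "C * geom_mean (1 - r) (\<beta> i) (\<alpha> j) \<le> F x" if "i < n" "j < m" "x \<in> S j i" for i j x
    using F_ge[OF that(2,1,3)] by (simp add: geom_mean_commute)
  show "b * geom_mean (1 - r) (Suc i) (Suc j) \<le> card (S j i)" if "i < n" "j < m" for i j
    using card_S_ge[OF that(2,1)] by (simp add: geom_mean_commute)
qed (use r_bounds F_nonneg finite_S S_mono \<alpha>_pos \<alpha>_antimono \<beta>_pos \<beta>_antimono b_nonneg C_nonneg in auto)

lemma row_exit_covered:
  assumes "valid_state i j \<rho> \<sigma> S0" "\<rho> \<le> \<sigma>"
  shows "b * geom_mean r (Suc i) (progress \<beta> j (\<sigma> - \<rho>)) \<le> card (S i j)"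
proof -
  have ij: "i < m" "j < n" and "0 \<le> \<rho>" "\<sigma> \<le> \<beta> j" using assms by (auto simp: valid_state_def)
  then have "0 \<le> progress \<beta> j (\<sigma> - \<rho>)" "progress \<beta> j (\<sigma> - \<rho>) \<le> Suc j"
    using progress_bounds[of \<beta> j "\<sigma> - \<rho>"] \<beta>_pos assms(2) by auto
  then have "geom_mean r (Suc i) (progress \<beta> j (\<sigma> - \<rho>)) \<le> geom_mean r (Suc i) (Suc j)"
    using r_bounds by (intro geom_mean_mono) auto
  then show ?thesis using card_S_ge[OF ij] b_nonneg by (meson mult_left_mono order_trans)
qed

lemma valid_state_next_row:
  assumes valid: "valid_state i j \<rho> \<sigma> S0" and "\<rho> \<le> \<sigma>" "Suc i < m"
  shows "valid_state (Suc i) j (\<alpha> (Suc i)) (\<sigma> - \<rho>) (S i j)"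
  using assms \<alpha>_pos[OF \<open>Suc i < m\<close>] row_exit_covered[OF assms(1,2)] S_mono[of i "Suc i" j j]
  by (auto simp: valid_state_def sum.atLeast_Suc_lessThan progress_full)

lemma row_gain:
  assumes "valid_state i j \<rho> \<sigma> S0"
  shows "C * geom_mean r (\<alpha> i) (\<beta> j) * geom_mean r (progress \<alpha> i \<rho>) (progress \<beta> j \<sigma>) + C * \<rho>
    \<le> C * geom_mean r (\<alpha> i) (\<beta> j) * geom_mean r (Suc i) (progress \<beta> j (\<sigma> - \<rho>))"
proof -
  have ij: "i < m" "j < n" and \<rho>: "0 \<le> \<rho>" "\<rho> \<le> \<alpha> i" and \<sigma>: "0 \<le> \<sigma>" "\<sigma> \<le> \<beta> j"
    using assms by (auto simp: valid_state_def)
  have \<alpha>i: "0 < \<alpha> i" and \<beta>j: "0 < \<beta> j" using ij \<alpha>_pos \<beta>_pos by auto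
  have "0 \<le> progress \<alpha> i \<rho>" "0 \<le> progress \<beta> j \<sigma>"
    using progress_bounds[of \<alpha> i \<rho>] progress_bounds[of \<beta> j \<sigma>] \<alpha>i \<beta>j \<rho> \<sigma> by auto
  from geom_mean_gain[OF r_bounds \<alpha>i \<beta>j this \<rho>(1)]
  have "geom_mean r (\<alpha> i) (\<beta> j) * geom_mean r (progress \<alpha> i \<rho>) (progress \<beta> j \<sigma>) + \<rho>
      \<le> geom_mean r (\<alpha> i) (\<beta> j) * geom_mean r (Suc i) (progress \<beta> j (\<sigma> - \<rho>))"
    using \<alpha>i \<beta>j by (simp add: progress_spend) (simp add: progress_def)
  then show ?thesis using mult_left_mono[OF _ C_nonneg] by (fastforce simp: algebra_simps)
qed

lemma row_step:
  assumes valid: "valid_state i j \<rho> \<sigma> S0" and le: "\<rho> \<le> \<sigma>"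
    and next_bound: "\<And>S1. valid_state (Suc i) j (\<alpha> (Suc i)) (\<sigma> - \<rho>) S1 \<Longrightarrow>
                        tail_bound (Suc i) j (\<alpha> (Suc i)) (\<sigma> - \<rho>) S1"
  shows "tail_bound i j \<rho> \<sigma> S0"
proof -
  define T where "T = S (m - 1) (n - 1)"
  define l where "l = C * geom_mean r (\<alpha> i) (\<beta> j)"
  define v' where "v' = progress \<beta> j (\<sigma> - \<rho>)"
  have ij: "i < m" "j < n" and S0: "S0 \<subseteq> S i j" using valid by (auto simp: valid_state_def)
  have l: "0 \<le> l" by (simp add: l_def C_nonneg geom_mean_nonneg)
  have covered: "b * geom_mean r (Suc i) v' \<le> card (S i j)"
    unfolding v'_def by (rule row_exit_covered[OF valid le])
  have layer: "l * (real (card (S i j)) - real (card S0)) + (\<Sum>x\<in>T - S i j. F x) \<le> (\<Sum>x\<in>T - S0. F x)"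
    by (rule sum_Diff_ge_layer) (use finite_S S0 S_mono ij F_ge in \<open>auto simp: T_def l_def\<close>)
  have rest: "b * C * (\<Sum>i'\<in>{Suc i..<m}. \<alpha> i') - l * (card (S i j) - b * geom_mean r (Suc i) v')
      \<le> (\<Sum>x\<in>T - S i j. F x)"
  proof (cases "Suc i < m")
    case True
    have "tail_bound (Suc i) j (\<alpha> (Suc i)) (\<sigma> - \<rho>) (S i j)"
      by (rule next_bound[OF valid_state_next_row[OF valid le True]])
    moreover have "C * geom_mean r (\<alpha> (Suc i)) (\<beta> j) * (card (S i j) - b * geom_mean r (Suc i) v')
        \<le> l * (card (S i j) - b * geom_mean r (Suc i) v')"
      unfolding l_def using covered True ij \<alpha>_pos \<beta>_pos \<alpha>_antimono[of i "Suc i"] r_bounds C_nonneg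
      by (intro mult_right_mono mult_left_mono geom_mean_mono) (auto intro: less_imp_le)
    ultimately show ?thesis
      using True \<alpha>_pos by (simp add: tail_bound_def T_def sum.atLeast_Suc_lessThan progress_full v'_def)
  next
    case False
    have "0 \<le> l * (card (S i j) - b * geom_mean r (Suc i) v')" using l covered by simp
    moreover have "0 \<le> (\<Sum>x\<in>T - S i j. F x)" using F_nonneg by (simp add: sum_nonneg)
    ultimately show ?thesis using False by simp
  qed
  have "b * (l * geom_mean r (progress \<alpha> i \<rho>) (progress \<beta> j \<sigma>)) + b * (C * \<rho>) \<le> b * (l * geom_mean r (Suc i) v')"
    using mult_left_mono[OF row_gain[OF valid] b_nonneg] by (simp add: l_def v'_def distrib_left)
  then show ?thesis
    using layer rest unfolding tail_bound_def T_def[symmetric] l_def[symmetric]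
    by (simp add: algebra_simps)
qed

lemma column_step:
  assumes valid: "valid_state i j \<rho> \<sigma> S0" and le: "\<sigma> \<le> \<rho>"
    and next_bound: "\<And>S1. valid_state i (Suc j) (\<rho> - \<sigma>) (\<beta> (Suc j)) S1 \<Longrightarrow>
                        tail_bound i (Suc j) (\<rho> - \<sigma>) (\<beta> (Suc j)) S1"
  shows "tail_bound i j \<rho> \<sigma> S0"
proof -
  interpret transposed: staircase F "\<lambda>i j. S j i" \<beta> \<alpha> n m "1 - r" b C by (rule transpose)
  have valid_iff: "transposed.valid_state j' i' \<sigma>' \<rho>' S1 \<longleftrightarrow> valid_state i' j' \<rho>' \<sigma>' S1" for i' j' \<rho>' \<sigma>' S1
    unfolding valid_state_def transposed.valid_state_def by (auto simp: geom_mean_commute)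
  have bound_iff: "transposed.tail_bound j' i' \<sigma>' \<rho>' S1 \<longleftrightarrow> tail_bound i' j' \<rho>' \<sigma>' S1"
    if "valid_state i' j' \<rho>' \<sigma>' S1" for i' j' \<rho>' \<sigma>' S1
    using that unfolding valid_state_def tail_bound_def transposed.tail_bound_def
    by (simp add: geom_mean_commute)
  show ?thesis
    using transposed.row_step[of j i \<sigma> \<rho> S0] valid le next_bound
    by (simp add: valid_iff bound_iff)
qed

lemma valid_state_tail_bound: "valid_state i j \<rho> \<sigma> S0 \<Longrightarrow> tail_bound i j \<rho> \<sigma> S0"
proof (induction "(m - i) + (n - j)" arbitrary: i j \<rho> \<sigma> S0 rule: less_induct)
  case less
  consider "\<rho> \<le> \<sigma>" | "\<sigma> \<le> \<rho>" by linarith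
  then show ?case
  proof cases
    case 1
    show ?thesis
    proof (rule row_step[OF less.prems 1])
      fix S1 assume "valid_state (Suc i) j (\<alpha> (Suc i)) (\<sigma> - \<rho>) S1"
      moreover from this have "m - Suc i + (n - j) < m - i + (n - j)" by (auto simp: valid_state_def)
      ultimately show "tail_bound (Suc i) j (\<alpha> (Suc i)) (\<sigma> - \<rho>) S1" using less.hyps by blast
    qed
  next
    case 2
    show ?thesis
    proof (rule column_step[OF less.prems 2])
      fix S1 assume "valid_state i (Suc j) (\<rho> - \<sigma>) (\<beta> (Suc j)) S1"
      moreover from this have "m - i + (n - Suc j) < m - i + (n - j)" by (auto simp: valid_state_def)
      ultimately show "tail_bound i (Suc j) (\<rho> - \<sigma>) (\<beta> (Suc j)) S1" using less.hyps by blast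
    qed
  qed
qed

lemma mass_le_sum:
  assumes "0 < m" "0 < n" and mass: "(\<Sum>i<m. \<alpha> i) = (\<Sum>j<n. \<beta> j)"
  shows "b * C * (\<Sum>i<m. \<alpha> i) \<le> (\<Sum>x\<in>S (m - 1) (n - 1). F x)"
proof -
  have split: "(\<Sum>i<m. \<alpha> i) = \<alpha> 0 + (\<Sum>i\<in>{Suc 0..<m}. \<alpha> i)" "(\<Sum>j<n. \<beta> j) = \<beta> 0 + (\<Sum>j\<in>{Suc 0..<n}. \<beta> j)"
    using assms by (simp_all add: lessThan_atLeast0 sum.atLeast_Suc_lessThan)
  have start: "progress \<alpha> 0 (\<alpha> 0) = 0" "progress \<beta> 0 (\<beta> 0) = 0"
    using assms \<alpha>_pos \<beta>_pos by (simp_all add: progress_full)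
  have "valid_state 0 0 (\<alpha> 0) (\<beta> 0) {}"
    using assms \<alpha>_pos \<beta>_pos r_bounds split
    by (auto simp: valid_state_def start geom_mean_def less_imp_le)
  then have "tail_bound 0 0 (\<alpha> 0) (\<beta> 0) {}" by (rule valid_state_tail_bound)
  then show ?thesis
    using r_bounds by (simp add: tail_bound_def start split geom_mean_def)
qed

end

section \<open>Max-convolution of nonnegative summable functions\<close>

lemma nonneg_le_infsum:
  fixes f :: "'a \<Rightarrow> real"
  assumes "\<And>x. 0 \<le> f x" "f summable_on UNIV"
  shows "f x \<le> infsum f UNIV"
  using finite_sum_le_infsum[of f UNIV "{x}"] assms by simp

lemma has_sum_sum:
  fixes f :: "'i \<Rightarrow> 'a \<Rightarrow> real"
  assumes "finite I" "\<And>i. i \<in> I \<Longrightarrow> (f i has_sum s i) A"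
  shows "((\<lambda>x. \<Sum>i\<in>I. f i x) has_sum (\<Sum>i\<in>I. s i)) A"
  using assms by (induction I rule: finite_induct) (auto intro: has_sum_add)

lemma maxconv_le:
  "(\<And>t. f t * g (x - t) \<le> M) \<Longrightarrow> maxconv f g x \<le> M"
  unfolding maxconv_def by (rule cSUP_least) auto

context
  fixes f g :: "'a::ab_group_add \<Rightarrow> real"
  assumes f_nonneg: "\<And>x. 0 \<le> f x" and f_summable: "f summable_on UNIV"
    and g_nonneg: "\<And>x. 0 \<le> g x" and g_summable: "g summable_on UNIV"
begin

lemma maxconv_ge: "f t * g (x - t) \<le> maxconv f g x"
proof -
  have "f s * g (x - s) \<le> infsum f UNIV * infsum g UNIV" for s
    by (intro mult_mono nonneg_le_infsum f_nonneg f_summable g_nonneg g_summable)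
       (simp_all add: infsum_nonneg f_nonneg)
  then have "bdd_above (range (\<lambda>s. f s * g (x - s)))" by (rule bdd_aboveI2)
  then show ?thesis unfolding maxconv_def by (rule cSUP_upper[rotated]) simp
qed

lemma maxconv_nonneg: "0 \<le> maxconv f g x"
  using maxconv_ge[of 0 x] f_nonneg g_nonneg by (meson mult_nonneg_nonneg order_trans)

text \<open>The max-convolution is dominated by the ordinary convolution, whose l1 norm is the product
  of the l1 norms.\<close>
lemma maxconv_summable: "maxconv f g summable_on UNIV"
proof (rule nonneg_bdd_above_summable_on)
  define Nf Ng where "Nf = infsum f UNIV" and "Ng = infsum g UNIV"
  have summable_x: "(\<lambda>t. f t * g (x - t)) summable_on UNIV" for x
  proof (rule summable_on_comparison_test)
    show "(\<lambda>t. f t * Ng) summable_on UNIV" using f_summable by (rule summable_on_cmult_left)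
    show "f t * g (x - t) \<le> f t * Ng" for t
      unfolding Ng_def by (intro mult_left_mono f_nonneg nonneg_le_infsum g_nonneg g_summable)
  qed (simp add: f_nonneg g_nonneg)
  have "sum (maxconv f g) X \<le> Nf * Ng" if X: "finite X" for X
  proof -
    have sum_has_sum: "((\<lambda>t. \<Sum>x\<in>X. f t * g (x - t)) has_sum (\<Sum>x\<in>X. infsum (\<lambda>t. f t * g (x - t)) UNIV)) UNIV"
      using X summable_x by (intro has_sum_sum has_sum_infsum)
    have "sum (maxconv f g) X \<le> (\<Sum>x\<in>X. infsum (\<lambda>t. f t * g (x - t)) UNIV)"
      by (intro sum_mono maxconv_le nonneg_le_infsum summable_x) (simp add: f_nonneg g_nonneg)
    also have "\<dots> = infsum (\<lambda>t. \<Sum>x\<in>X. f t * g (x - t)) UNIV"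
      using infsumI[OF sum_has_sum] by simp
    also have "\<dots> \<le> infsum (\<lambda>t. f t * Ng) UNIV"
    proof (rule infsum_mono)
      show "(\<lambda>t. \<Sum>x\<in>X. f t * g (x - t)) summable_on UNIV"
        using sum_has_sum by (rule has_sum_imp_summable)
      show "(\<lambda>t. f t * Ng) summable_on UNIV" using f_summable by (simp add: summable_on_cmult_left)
      fix t
      have "(\<Sum>x\<in>X. g (x - t)) = sum g ((\<lambda>x. x - t) ` X)"
        by (simp add: sum.reindex inj_on_def)
      also have "\<dots> \<le> Ng"
        unfolding Ng_def by (rule finite_sum_le_infsum) (use X g_summable g_nonneg in auto)
      finally show "(\<Sum>x\<in>X. f t * g (x - t)) \<le> f t * Ng"
        using f_nonneg[of t] by (simp add: sum_distrib_left[symmetric] mult_left_mono)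
    qed
    also have "\<dots> = Nf * Ng" by (simp add: infsum_cmult_left' Nf_def)
    finally show ?thesis .
  qed
  then show "bdd_above (sum (maxconv f g) ` {X. X \<subseteq> UNIV \<and> finite X})"
    by (intro bdd_aboveI2[where M = "Nf * Ng"]) auto
qed (rule maxconv_nonneg)

end

section \<open>Admissible functions and truncation to level sets\<close>

lemma admissible_nonneg: "admissible g \<Longrightarrow> 0 \<le> g x"
  and admissible_summable: "admissible g \<Longrightarrow> g summable_on UNIV"
  by (simp_all add: admissible_def)

lemma admissible_le_norm1: "admissible g \<Longrightarrow> g x \<le> norm1 g"
  unfolding admissible_def norm1_def by (auto intro: nonneg_le_infsum)

lemma finite_level_set:
  assumes "admissible g" "0 < e"
  shows "finite {x. e \<le> g x}"
proof -
  have "card X \<le> nat \<lceil>norm1 g / e\<rceil>" if "X \<subseteq> {x. e \<le> g x}" "finite X" for X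
  proof -
    have "real (card X) * e \<le> sum g X"
      by (rule sum_bounded_below) (use that in auto)
    also have "\<dots> \<le> norm1 g"
      unfolding norm1_def by (rule finite_sum_le_infsum) (use assms that in \<open>auto simp: admissible_def\<close>)
    finally have "real (card X) \<le> norm1 g / e" using assms by (simp add: field_simps)
    then show ?thesis by linarith
  qed
  then show ?thesis using finite_if_finite_subsets_card_bdd by blast
qed

lemma admissible_powr_summable:
  assumes g: "admissible g" and p: "1 \<le> p"
  shows "(\<lambda>x. g x powr p) summable_on UNIV"
proof (rule summable_on_comparison_test)
  show "(\<lambda>x. norm1 g powr (p - 1) * g x) summable_on UNIV"
    using admissible_summable[OF g] by (rule summable_on_cmult_right)
  fix x
  have gx: "0 \<le> g x" "g x \<le> norm1 g" using admissible_nonneg[OF g] admissible_le_norm1[OF g] .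
  show "g x powr p \<le> norm1 g powr (p - 1) * g x"
  proof (cases "g x = 0")
    case False
    then have "g x powr p = g x powr (p - 1) * g x" using gx by (simp add: powr_diff)
    also have "\<dots> \<le> norm1 g powr (p - 1) * g x"
      using gx p by (intro mult_right_mono powr_mono2) auto
    finally show ?thesis .
  qed (use p in simp)
qed simp

lemma admissible_powr_infsum_pos:
  assumes g: "admissible g" and p: "1 \<le> p"
  shows "0 < infsum (\<lambda>x. g x powr p) UNIV"
proof -
  obtain x where "g x \<noteq> 0" using g by (auto simp: admissible_def)
  then have "0 < g x powr p" using g by (simp add: admissible_def)
  also have "\<dots> \<le> infsum (\<lambda>x. g x powr p) UNIV"
    by (intro nonneg_le_infsum admissible_powr_summable[OF g p]) simp
  finally show ?thesis .
qed

lemma lpnorm_pos: "admissible g \<Longrightarrow> 1 \<le> p \<Longrightarrow> 0 < lpnorm p g"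
  using admissible_powr_infsum_pos[of g p] by (simp add: lpnorm_def)

lemma lpnorm_nonneg: "0 \<le> lpnorm p g"
  by (simp add: lpnorm_def)

lemma level_sum_approximates:
  assumes g: "admissible g" and p: "1 \<le> p" and z: "z < 1"
  obtains e where "0 < e" "z * infsum (\<lambda>x. g x powr p) UNIV \<le> (\<Sum>x\<in>{x. e \<le> g x}. g x powr p)"
proof -
  define P where "P = infsum (\<lambda>x. g x powr p) UNIV"
  have "0 < P" using admissible_powr_infsum_pos[OF g p] by (simp add: P_def)
  have "((\<lambda>x. g x powr p) has_sum P) UNIV"
    unfolding P_def using admissible_powr_summable[OF g p] by (rule has_sum_infsum)
  from has_sum_finite_approximation[OF this, of "(1 - z) * P"] \<open>0 < P\<close> z
  obtain X where X: "finite X" "dist (\<Sum>x\<in>X. g x powr p) P \<le> (1 - z) * P"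
    by auto
  define Y where "Y = {x\<in>X. 0 < g x}"
  define e where "e = Min (insert 1 (g ` Y))"
  have "finite Y" using X(1) by (simp add: Y_def)
  then have e: "0 < e" "\<And>x. x \<in> Y \<Longrightarrow> e \<le> g x" by (auto simp: e_def Y_def)
  have "z * P \<le> (\<Sum>x\<in>X. g x powr p)"
    using X(2) by (simp add: dist_real_def abs_le_iff algebra_simps)
  also have "\<dots> = (\<Sum>x\<in>Y. g x powr p)"
    using X(1) g by (intro sum.mono_neutral_right) (auto simp: Y_def admissible_def order_le_less)
  also have "\<dots> \<le> (\<Sum>x\<in>{x. e \<le> g x}. g x powr p)"
    using finite_level_set[OF g e(1)] e(2) by (intro sum_mono2) auto
  finally show ?thesis using that e(1) by (simp add: P_def)
qed

lemma lpnorm_mult_le_of_level_bounds: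
  assumes g: "admissible g" and h: "admissible h" and p: "1 \<le> p" and q: "1 \<le> q"
    and pq: "1/p + 1/q = 1" and b: "0 \<le> b"
    and levels: "\<And>e. 0 < e \<Longrightarrow> b * (\<Sum>x\<in>{x. e \<le> g x}. g x powr p) powr (1/p)
                                   * (\<Sum>x\<in>{x. e \<le> h x}. h x powr q) powr (1/q) \<le> N"
  shows "b * lpnorm p g * lpnorm q h \<le> N"
proof (rule field_le_mult_one_interval)
  fix z :: real assume z: "0 < z" "z < 1"
  define P Q where "P = infsum (\<lambda>x. g x powr p) UNIV" and "Q = infsum (\<lambda>x. h x powr q) UNIV"
  define Lg Lh where "Lg e = (\<Sum>x\<in>{x. e \<le> g x}. g x powr p)" and "Lh e = (\<Sum>x\<in>{x. e \<le> h x}. h x powr q)"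
    for e
  have "0 < P" "0 < Q"
    using admissible_powr_infsum_pos[OF g p] admissible_powr_infsum_pos[OF h q] by (simp_all add: P_def Q_def)
  obtain e1 e2 where e: "0 < e1" "z * P \<le> Lg e1" "0 < e2" "z * Q \<le> Lh e2"
    using level_sum_approximates[OF g p z(2)] level_sum_approximates[OF h q z(2)]
    unfolding P_def Q_def Lg_def Lh_def by metis
  define e where "e = min e1 e2"
  have "Lg e1 \<le> Lg e" "Lh e2 \<le> Lh e"
    unfolding Lg_def Lh_def e_def using finite_level_set[OF g] finite_level_set[OF h] e
    by (intro sum_mono2; force)+
  then have "(z * P) powr (1/p) * (z * Q) powr (1/q) \<le> Lg e powr (1/p) * Lh e powr (1/q)"
    using e z p q \<open>0 < P\<close> \<open>0 < Q\<close> by (intro mult_mono powr_mono2) auto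
  moreover have "(z * P) powr (1/p) * (z * Q) powr (1/q) = z * (P powr (1/p) * Q powr (1/q))"
    using z \<open>0 < P\<close> \<open>0 < Q\<close> pq by (simp add: powr_mult powr_add[symmetric])
  ultimately have levels_z: "z * (P powr (1/p) * Q powr (1/q)) \<le> Lg e powr (1/p) * Lh e powr (1/q)"
    by simp
  have "z * (b * lpnorm p g * lpnorm q h) \<le> b * (Lg e powr (1/p) * Lh e powr (1/q))"
    using mult_left_mono[OF levels_z b] by (simp add: lpnorm_def P_def Q_def mult_ac)
  also have "\<dots> \<le> N" using levels[of e] e by (simp add: e_def Lg_def Lh_def mult.assoc)
  finally show "z * (b * lpnorm p g * lpnorm q h) \<le> N" .
qed

section \<open>Sumsets, indicators and the set functionals\<close>

lemma sumset_finite: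
  assumes "finite A" "finite B"
  shows "finite (sumset A B)"
proof -
  have "sumset A B = (\<lambda>(a, b). a + b) ` (A \<times> B)" by (auto simp: sumset_def)
  then show ?thesis using assms by simp
qed

lemma sumset_mono: "A \<subseteq> A' \<Longrightarrow> B \<subseteq> B' \<Longrightarrow> sumset A B \<subseteq> sumset A' B'"
  unfolding sumset_def by blast

lemma sumset3E:
  assumes "x \<in> sumset (sumset A B) C"
  obtains a b c where "a \<in> A" "b \<in> B" "c \<in> C" "x = a + b + c"
  using assms unfolding sumset_def by blast

lemma sumset_rotate: "sumset (sumset C A) B = sumset (sumset A B) C"
  unfolding sumset_def by (auto; metis add.assoc add.commute)

lemma maxconv_indicator:
  "maxconv (indicator A :: 'a::ab_group_add \<Rightarrow> real) (indicator B) = indicator (sumset A B)"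
proof
  fix x
  show "maxconv (indicator A) (indicator B) x = (indicator (sumset A B) x :: real)"
  proof (cases "x \<in> sumset A B")
    case True
    then obtain a where "a \<in> A" "x - a \<in> B" by (auto simp: sumset_def)
    then have "(SUP t. indicator A t * indicator B (x - t)) = (1::real)"
      by (intro cSup_eq_maximum) (auto simp: indicator_def)
    then show ?thesis using True by (simp add: maxconv_def)
  next
    case False
    then have zero: "(\<lambda>t. indicator A t * indicator B (x - t)) = (\<lambda>_. 0::real)"
      by (auto simp: indicator_def sumset_def)
    show ?thesis using False unfolding maxconv_def zero by simp
  qed
qed

lemma indicator_summable: "finite A \<Longrightarrow> (indicator A :: 'a \<Rightarrow> real) summable_on UNIV"
  by (rule finite_nonzero_values_imp_summable_on) (simp add: indicator_def)

lemma norm1_indicator: "finite A \<Longrightarrow> norm1 (indicator A :: 'a \<Rightarrow> real) = card A"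
  unfolding norm1_def by (subst infsum_cong_neutral[where T = A]) auto

lemma lpnorm_indicator:
  assumes "finite A" "0 < p"
  shows "lpnorm p (indicator A :: 'a \<Rightarrow> real) = card A powr (1/p)"
proof -
  have "(\<lambda>x. (indicator A x :: real) powr p) = indicator A"
    using assms by (auto simp: indicator_def)
  then show ?thesis using norm1_indicator[OF assms(1)] by (simp add: lpnorm_def norm1_def)
qed

lemma admissible_indicator: "finite A \<Longrightarrow> A \<noteq> {} \<Longrightarrow> admissible (indicator A :: 'a \<Rightarrow> real)"
  unfolding admissible_def by (auto simp: indicator_summable fun_eq_iff indicator_def)

lemma ident_distrib_indicator:
  "card A = card B \<Longrightarrow> ident_distrib (indicator A :: 'a \<Rightarrow> real) (indicator B)"
proof -
  assume "card A = card B"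
  moreover have "{x. t \<le> (indicator X x :: real)} = (if t \<le> 1 then X else {})" if "0 < t" for t and X :: "'a set"
    using that by (auto simp: indicator_def)
  ultimately show ?thesis by (simp add: ident_distrib_def)
qed

lemma norm1_maxconv_indicators:
  fixes U A B :: "'a::ab_group_add set"
  assumes "finite U" "finite A" "finite B"
  shows "norm1 (maxconv (maxconv (indicator U) (indicator A)) (indicator B) :: 'a \<Rightarrow> real)
    = card (sumset (sumset A B) U)"
  using assms by (simp add: maxconv_indicator sumset_rotate norm1_indicator sumset_finite)

lemma beta_p_nonneg: "0 \<le> beta_p p U"
  unfolding beta_p_def by (rule cInf_greatest) (auto intro!: exI[of _ "{0}"])

lemma beta'_nonneg: "0 \<le> beta' U"
  unfolding beta'_def by (rule cInf_greatest) (auto intro!: exI[of _ "{0}"])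

lemma beta''_nonneg: "0 \<le> beta'' U"
  unfolding beta''_def by (rule cInf_greatest) (auto intro!: exI[of _ "{0}"])

lemma beta_p_mult_le_card:
  assumes "finite A" "A \<noteq> {}" "finite B" "B \<noteq> {}"
  shows "beta_p p U * geom_mean (1/p) (card A) (card B) \<le> card (sumset (sumset A B) U)"
proof -
  have "beta_p p U \<le> card (sumset (sumset A B) U) / geom_mean (1/p) (card A) (card B)"
    unfolding beta_p_def geom_mean_def
    by (rule cInf_lower) (use assms in \<open>auto intro!: bdd_belowI[where m = 0]\<close>)
  moreover have "0 < geom_mean (1/p) (card A) (card B)"
    using assms by (simp add: geom_mean_def card_gt_0_iff)
  ultimately show ?thesis by (simp add: pos_le_divide_eq)
qed

lemma beta'_mult_le_card:
  assumes "finite A" "A \<noteq> {}" "finite B" "card A = card B"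
  shows "beta' U * card A \<le> card (sumset (sumset A B) U)"
proof -
  have "B \<noteq> {}" using assms by (metis card.empty card_0_eq)
  have "beta' U \<le> card (sumset (sumset A B) U) / sqrt (real (card A) * real (card B))"
    unfolding beta'_def
    by (rule cInf_lower) (use assms \<open>B \<noteq> {}\<close> in blast, auto intro!: bdd_belowI[where m = 0])
  moreover have "0 < card A" using assms(1,2) by (simp add: card_gt_0_iff)
  ultimately show ?thesis using assms(4) by (simp add: pos_le_divide_eq)
qed

lemma beta''_mult_le_card:
  assumes "finite A" "A \<noteq> {}"
  shows "beta'' U * card A \<le> card (sumset (sumset A A) U)"
proof -
  have "beta'' U \<le> card (sumset (sumset A A) U) / card A"
    unfolding beta''_def
    by (rule cInf_lower) (use assms in \<open>auto intro!: bdd_belowI[where m = 0]\<close>)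
  moreover have "0 < card A" using assms by (simp add: card_gt_0_iff)
  ultimately show ?thesis by (simp add: pos_le_divide_eq)
qed

section \<open>Lower bounds on level sets\<close>

lemma decreasing_enumeration:
  fixes g :: "'a \<Rightarrow> real"
  assumes "finite L"
  obtains ys where "distinct ys" "set ys = L" "sorted_wrt (\<lambda>x y. g y \<le> g x) ys"
proof -
  obtain xs where "distinct xs" "set xs = L" using finite_distinct_list[OF assms] by blast
  moreover have "sorted_wrt (\<lambda>x y. g y \<le> g x) (sort_key (\<lambda>x. - g x) xs)"
    using sorted_sort_key[of "\<lambda>x. - g x" xs] by (simp add: sorted_wrt_map)
  ultimately show ?thesis using that[of "sort_key (\<lambda>x. - g x) xs"] by simp
qed

lemma sorted_nth_antimono:
  "sorted_wrt (\<lambda>x y. g y \<le> g x) ys \<Longrightarrow> i \<le> j \<Longrightarrow> j < length ys \<Longrightarrow> g (ys ! j) \<le> (g (ys ! i) :: real)"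
  using sorted_wrt_nth_less[of "\<lambda>x y. g y \<le> g x" ys i j] by (cases "i = j") auto

lemma sorted_prefix_ge:
  assumes "sorted_wrt (\<lambda>x y. g y \<le> g x) ys" "i < length ys" "x \<in> set (take (Suc i) ys)"
  shows "g (ys ! i) \<le> (g x :: real)"
proof -
  obtain k where "k < length (take (Suc i) ys)" "take (Suc i) ys ! k = x"
    using assms(3) unfolding in_set_conv_nth by blast
  then show ?thesis using sorted_nth_antimono[OF assms(1), of k i] assms(2) by auto
qed

lemma card_prefix: "distinct ys \<Longrightarrow> i < length ys \<Longrightarrow> card (set (take (Suc i) ys)) = Suc i"
  by (simp add: distinct_card)

lemma sum_nth_distinct: "distinct ys \<Longrightarrow> (\<Sum>i<length ys. f (ys ! i)) = (\<Sum>x\<in>set ys. f x)"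
  by (simp add: sum.distinct_set_conv_list sum_list_sum_nth atLeast0LessThan)

lemma ident_distrib_sorted_le:
  assumes id: "ident_distrib g h" and e: "0 < e"
    and ys: "set ys = {x. e \<le> g x}" "sorted_wrt (\<lambda>x y. g y \<le> g x) ys"
    and zs: "distinct zs" "set zs = {x. e \<le> h x}" "sorted_wrt (\<lambda>x y. h y \<le> h x) zs"
    and i: "i < length ys" "i < length zs"
  shows "h (zs ! i) \<le> g (ys ! i)"
proof (rule ccontr)
  define t where "t = h (zs ! i)"
  assume "\<not> h (zs ! i) \<le> g (ys ! i)"
  then have less: "g (ys ! i) < t" by (simp add: t_def)
  have "e \<le> t" using zs(2) nth_mem[OF i(2)] by (auto simp: t_def)
  have "set (take (Suc i) zs) \<subseteq> {x. t \<le> h x}"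
    using sorted_prefix_ge[OF zs(3) i(2)] by (auto simp: t_def)
  moreover have "finite {x. t \<le> h x}"
    using \<open>e \<le> t\<close> by (auto intro: finite_subset[of _ "set zs"] simp: zs(2))
  ultimately have "Suc i \<le> card {x. t \<le> h x}"
    using card_mono card_prefix[OF zs(1) i(2)] by metis
  also have "\<dots> = card {x. t \<le> g x}"
    using id \<open>e \<le> t\<close> e by (simp add: ident_distrib_def)
  also have "\<dots> \<le> card (set (take i ys))"
  proof (rule card_mono)
    show "{x. t \<le> g x} \<subseteq> set (take i ys)"
    proof
      fix x assume "x \<in> {x. t \<le> g x}"
      then have "x \<in> set ys" "t \<le> g x" using ys(1) \<open>e \<le> t\<close> by auto
      then obtain k where "k < length ys" "x = ys ! k" "t \<le> g (ys ! k)" by (auto simp: in_set_conv_nth)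
      moreover have "\<not> i \<le> k" using sorted_nth_antimono[OF ys(2), of i k] less calculation by auto
      ultimately show "x \<in> set (take i ys)" by (auto simp: in_set_conv_nth)
    qed
  qed simp
  also have "\<dots> \<le> i" by (simp add: card_length[THEN order_trans])
  finally show False by simp
qed

lemma ident_distrib_sorted_eq:
  assumes id: "ident_distrib g h" and e: "0 < e"
    and ys: "distinct ys" "set ys = {x. e \<le> g x}" "sorted_wrt (\<lambda>x y. g y \<le> g x) ys"
    and zs: "distinct zs" "set zs = {x. e \<le> h x}" "sorted_wrt (\<lambda>x y. h y \<le> h x) zs"
  shows "length zs = length ys" and "\<And>i. i < length ys \<Longrightarrow> h (zs ! i) = g (ys ! i)"
proof -
  have "card (set ys) = card (set zs)" using id e by (simp add: ys(2) zs(2) ident_distrib_def)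
  then show len: "length zs = length ys" using ys(1) zs(1) by (simp add: distinct_card)
  have id': "ident_distrib h g" using id by (simp add: ident_distrib_def)
  show "h (zs ! i) = g (ys ! i)" if "i < length ys" for i
    using ident_distrib_sorted_le[OF id e ys(2,3) zs that] ident_distrib_sorted_le[OF id' e zs(2,3) ys]
      that len by (simp add: order_antisym)
qed

definition prefix_sumset :: "'a::ab_group_add list \<Rightarrow> 'a list \<Rightarrow> 'a set \<Rightarrow> nat \<Rightarrow> nat \<Rightarrow> 'a set" where
  "prefix_sumset ys zs U i j = sumset (sumset (set (take (Suc i) ys)) (set (take (Suc j) zs))) U"

lemma finite_prefix_sumset: "finite U \<Longrightarrow> finite (prefix_sumset ys zs U i j)"
  by (simp add: prefix_sumset_def sumset_finite)

lemma prefix_sumset_mono: "i \<le> i' \<Longrightarrow> j \<le> j' \<Longrightarrow> prefix_sumset ys zs U i j \<subseteq> prefix_sumset ys zs U i' j'"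
  unfolding prefix_sumset_def by (intro sumset_mono set_take_subset_set_take order_refl) auto

lemma maxconv_indicator_nonneg: "finite U \<Longrightarrow> admissible g \<Longrightarrow> 0 \<le> maxconv (indicator U) g x"
  by (rule maxconv_nonneg) (simp_all add: indicator_summable admissible_nonneg admissible_summable)

lemma maxconv_indicator_summable: "finite U \<Longrightarrow> admissible g \<Longrightarrow> maxconv (indicator U) g summable_on UNIV"
  by (rule maxconv_summable) (simp_all add: indicator_summable admissible_nonneg admissible_summable)

context
  fixes U :: "'a::ab_group_add set" and g h :: "'a \<Rightarrow> real"
  assumes U: "finite U" and g: "admissible g" and h: "admissible h"
begin

lemma maxconv3_nonneg: "0 \<le> maxconv (maxconv (indicator U) g) h x"
  by (rule maxconv_nonneg[OF maxconv_indicator_nonneg[OF U g] maxconv_indicator_summable[OF U g]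
        admissible_nonneg[OF h] admissible_summable[OF h]])

lemma maxconv3_summable: "maxconv (maxconv (indicator U) g) h summable_on UNIV"
  by (rule maxconv_summable[OF maxconv_indicator_nonneg[OF U g] maxconv_indicator_summable[OF U g]
        admissible_nonneg[OF h] admissible_summable[OF h]])

lemma sum_le_norm1_maxconv3:
  "finite X \<Longrightarrow> (\<Sum>x\<in>X. maxconv (maxconv (indicator U) g) h x) \<le> norm1 (maxconv (maxconv (indicator U) g) h)"
  unfolding norm1_def using maxconv3_summable maxconv3_nonneg by (intro finite_sum_le_infsum) auto

lemma norm1_maxconv3_nonneg: "0 \<le> norm1 (maxconv (maxconv (indicator U) g) h)"
  unfolding norm1_def using maxconv3_nonneg by (simp add: infsum_nonneg)

lemma maxconv3_ge: "u \<in> U \<Longrightarrow> g a * h b \<le> maxconv (maxconv (indicator U) g) h (a + b + u)"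
proof -
  assume "u \<in> U"
  have "g a = indicator U u * g (a + u - u)" using \<open>u \<in> U\<close> by simp
  also have "\<dots> \<le> maxconv (indicator U) g (a + u)"
    by (rule maxconv_ge[OF _ indicator_summable[OF U] admissible_nonneg[OF g] admissible_summable[OF g]]) simp
  finally have "g a * h b \<le> maxconv (indicator U) g (a + u) * h (a + b + u - (a + u))"
    using admissible_nonneg[OF h] by (simp add: mult_right_mono)
  also have "\<dots> \<le> maxconv (maxconv (indicator U) g) h (a + b + u)"
    by (rule maxconv_ge[OF maxconv_indicator_nonneg[OF U g] maxconv_indicator_summable[OF U g]
          admissible_nonneg[OF h] admissible_summable[OF h]])
  finally show ?thesis .
qed

lemma maxconv3_ge_on_prefix_sumset:
  assumes ys: "sorted_wrt (\<lambda>x y. g y \<le> g x) ys" "i < length ys"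
    and zs: "sorted_wrt (\<lambda>x y. h y \<le> h x) zs" "j < length zs"
    and x: "x \<in> prefix_sumset ys zs U i j"
  shows "g (ys ! i) * h (zs ! j) \<le> maxconv (maxconv (indicator U) g) h x"
proof -
  from x obtain a b u where ab: "a \<in> set (take (Suc i) ys)" "b \<in> set (take (Suc j) zs)"
    and "u \<in> U" "x = a + b + u"
    unfolding prefix_sumset_def by (rule sumset3E)
  have "g (ys ! i) * h (zs ! j) \<le> g a * h b"
    using sorted_prefix_ge[OF ys ab(1)] sorted_prefix_ge[OF zs ab(2)]
      admissible_nonneg[OF g] admissible_nonneg[OF h]
    by (intro mult_mono) auto
  also have "\<dots> \<le> maxconv (maxconv (indicator U) g) h x"
    using maxconv3_ge[OF \<open>u \<in> U\<close>] \<open>x = a + b + u\<close> by simp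
  finally show ?thesis .
qed

lemma staircase_prefix_sumsets:
  assumes p: "1 < p" and pq: "1/p + 1/q = 1"
    and ys: "distinct ys" "sorted_wrt (\<lambda>x y. g y \<le> g x) ys" "\<And>x. x \<in> set ys \<Longrightarrow> 0 < g x"
    and zs: "distinct zs" "sorted_wrt (\<lambda>x y. h y \<le> h x) zs" "\<And>x. x \<in> set zs \<Longrightarrow> 0 < h x"
    and P: "P = (\<Sum>x\<in>set ys. g x powr p)" and Q: "Q = (\<Sum>x\<in>set zs. h x powr q)"
  shows "staircase (maxconv (maxconv (indicator U) g) h) (prefix_sumset ys zs U)
           (\<lambda>i. g (ys ! i) powr p / P) (\<lambda>j. h (zs ! j) powr q / Q) (length ys) (length zs)
           (1/p) (beta_p p U) (P powr (1/p) * Q powr (1/q))"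
proof unfold_locales
  have "1/q = 1 - 1/p" using pq by simp
  then have "0 < 1/q" using p by simp
  then have q: "0 < q" by simp
  have P_pos: "0 < P" if "i < length ys" for i
    unfolding P using that ys(3) by (intro sum_pos) (auto simp: less_le)
  have Q_pos: "0 < Q" if "j < length zs" for j
    unfolding Q using that zs(3) by (intro sum_pos) (auto simp: less_le)
  show "P powr (1/p) * Q powr (1/q) * geom_mean (1/p) (g (ys ! i) powr p / P) (h (zs ! j) powr q / Q)
      \<le> maxconv (maxconv (indicator U) g) h x"
    if "i < length ys" "j < length zs" "x \<in> prefix_sumset ys zs U i j" for i j x
    using maxconv3_ge_on_prefix_sumset[OF ys(2) that(1) zs(2) that(2,3)] p
      geom_mean_normalized[OF _ _ P_pos[OF that(1)] Q_pos[OF that(2)] _ q pq]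
      admissible_nonneg[OF g] admissible_nonneg[OF h]
    by simp
  show "beta_p p U * geom_mean (1/p) (Suc i) (Suc j) \<le> card (prefix_sumset ys zs U i j)"
    if "i < length ys" "j < length zs" for i j
    using beta_p_mult_le_card[of "set (take (Suc i) ys)" "set (take (Suc j) zs)" p U] that
    by (simp add: prefix_sumset_def card_prefix ys(1) zs(1) take_eq_Nil flip: length_greater_0_conv)
  show "g (ys ! i') powr p / P \<le> g (ys ! i) powr p / P" if "i \<le> i'" "i' < length ys" for i i'
    using sorted_nth_antimono[OF ys(2) that] ys(3)[OF nth_mem[OF that(2)]] P_pos[OF that(2)] p
    by (intro divide_right_mono powr_mono2) auto
  show "h (zs ! j') powr q / Q \<le> h (zs ! j) powr q / Q" if "j \<le> j'" "j' < length zs" for j j'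
    using sorted_nth_antimono[OF zs(2) that] zs(3)[OF nth_mem[OF that(2)]] Q_pos[OF that(2)] q
    by (intro divide_right_mono powr_mono2) auto
  show "0 < g (ys ! i) powr p / P" if "i < length ys" for i
    using ys(3)[OF nth_mem[OF that]] P_pos[OF that] by simp
  show "0 < h (zs ! j) powr q / Q" if "j < length zs" for j
    using zs(3)[OF nth_mem[OF that]] Q_pos[OF that] by simp
  show "prefix_sumset ys zs U i j \<subseteq> prefix_sumset ys zs U i' j'" if "i \<le> i'" "j \<le> j'" for i j i' j'
    using that by (rule prefix_sumset_mono)
qed (use p maxconv3_nonneg finite_prefix_sumset[OF U] beta_p_nonneg in auto)

lemma beta_p_level_bound:
  assumes p: "1 < p" and pq: "1/p + 1/q = 1" and e: "0 < e"
  shows "beta_p p U * (\<Sum>x\<in>{x. e \<le> g x}. g x powr p) powr (1/p) * (\<Sum>x\<in>{x. e \<le> h x}. h x powr q) powr (1/q)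
    \<le> norm1 (maxconv (maxconv (indicator U) g) h)"
proof -
  obtain ys where ys: "distinct ys" "set ys = {x. e \<le> g x}" "sorted_wrt (\<lambda>x y. g y \<le> g x) ys"
    using decreasing_enumeration[OF finite_level_set[OF g e]] .
  obtain zs where zs: "distinct zs" "set zs = {x. e \<le> h x}" "sorted_wrt (\<lambda>x y. h y \<le> h x) zs"
    using decreasing_enumeration[OF finite_level_set[OF h e]] .
  define P Q where "P = (\<Sum>x\<in>set ys. g x powr p)" and "Q = (\<Sum>x\<in>set zs. h x powr q)"
  show ?thesis
  proof (cases "ys = [] \<or> zs = []")
    case True
    then show ?thesis using norm1_maxconv3_nonneg p ys(2) zs(2) by auto
  next
    case False
    have pos: "\<And>x. x \<in> set ys \<Longrightarrow> 0 < g x" "\<And>x. x \<in> set zs \<Longrightarrow> 0 < h x"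
      using ys(2) zs(2) e by auto
    have "0 < P" unfolding P_def using False by (intro sum_pos) (auto dest!: pos(1))
    have "0 < Q" unfolding Q_def using False by (intro sum_pos) (auto dest!: pos(2))
    note staircase = staircase_prefix_sumsets[OF p pq ys(1,3) pos(1) zs(1,3) pos(2) P_def Q_def]
    have "(\<Sum>i<length ys. g (ys ! i) powr p / P) = 1" "(\<Sum>j<length zs. h (zs ! j) powr q / Q) = 1"
      using \<open>0 < P\<close> \<open>0 < Q\<close> sum_nth_distinct[OF ys(1), of "\<lambda>x. g x powr p"]
        sum_nth_distinct[OF zs(1), of "\<lambda>x. h x powr q"]
      by (simp_all add: sum_divide_distrib[symmetric] P_def Q_def)
    then have "beta_p p U * (P powr (1/p) * Q powr (1/q))
        \<le> (\<Sum>x\<in>prefix_sumset ys zs U (length ys - 1) (length zs - 1). maxconv (maxconv (indicator U) g) h x)"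
      using staircase.mass_le_sum[OF staircase] False by simp
    also have "\<dots> \<le> norm1 (maxconv (maxconv (indicator U) g) h)"
      by (intro sum_le_norm1_maxconv3 finite_prefix_sumset U)
    finally show ?thesis by (simp add: P_def Q_def ys(2) zs(2) mult.assoc)
  qed
qed

lemma diagonal_level_bound:
  fixes b :: real
  assumes ys: "distinct ys" "set ys = {x. e \<le> g x}" "sorted_wrt (\<lambda>x y. g y \<le> g x) ys"
    and zs: "distinct zs" "set zs = {x. e \<le> h x}" "sorted_wrt (\<lambda>x y. h y \<le> h x) zs"
    and same: "length zs = length ys" "\<And>i. i < length ys \<Longrightarrow> h (zs ! i) = g (ys ! i)"
    and b: "0 \<le> b" and card: "\<And>i. i < length ys \<Longrightarrow> b * Suc i \<le> card (prefix_sumset ys zs U i i)"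
  shows "b * (\<Sum>x\<in>{x. e \<le> g x}. g x powr 2) powr (1/2) * (\<Sum>x\<in>{x. e \<le> h x}. h x powr 2) powr (1/2)
    \<le> norm1 (maxconv (maxconv (indicator U) g) h)"
proof -
  define m where "m = length ys - 1"
  define s where "s = (\<Sum>i<length ys. g (ys ! i) ^ 2)"
  have "(\<Sum>x\<in>{x. e \<le> g x}. g x powr 2) = s" "(\<Sum>x\<in>{x. e \<le> h x}. h x powr 2) = s"
    using sum_nth_distinct[OF ys(1), of "\<lambda>x. g x powr 2"] sum_nth_distinct[OF zs(1), of "\<lambda>x. h x powr 2"]
      admissible_nonneg[OF g] admissible_nonneg[OF h] same
    by (simp_all add: ys(2) zs(2) s_def)
  moreover have "s powr (1/2) * s powr (1/2) = s"
    by (simp add: s_def powr_add[symmetric] sum_nonneg)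
  moreover have "b * s \<le> norm1 (maxconv (maxconv (indicator U) g) h)"
  proof (cases "ys = []")
    case True
    then show ?thesis using norm1_maxconv3_nonneg by (simp add: s_def)
  next
    case False
    then have index: "i \<le> m \<longleftrightarrow> i < length ys" for i by (cases ys) (auto simp: m_def less_Suc_eq_le)
    then have lessThan: "{..<length ys} = {..m}" by auto
    have "b * s \<le> (\<Sum>x\<in>prefix_sumset ys zs U m m. maxconv (maxconv (indicator U) g) h x)"
      unfolding s_def lessThan
    proof (rule nested_sum_lower_bound)
      show "g (ys ! i) ^ 2 \<le> maxconv (maxconv (indicator U) g) h x"
        if "i \<le> m" "x \<in> prefix_sumset ys zs U i i" for i x
        using maxconv3_ge_on_prefix_sumset[OF ys(3) _ zs(3) _ that(2)] that(1) same
        by (simp add: index power2_eq_square)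
      show "b * Suc i \<le> card (prefix_sumset ys zs U i i)" if "i \<le> m" for i
        using card that by (simp add: index)
      show "g (ys ! Suc i) ^ 2 \<le> g (ys ! i) ^ 2" if "i < m" for i
        using sorted_nth_antimono[OF ys(3), of i "Suc i"] admissible_nonneg[OF g] that index[of "Suc i"]
        by (simp add: power_mono)
    qed (simp_all add: maxconv3_nonneg finite_prefix_sumset U prefix_sumset_mono)
    also have "\<dots> \<le> norm1 (maxconv (maxconv (indicator U) g) h)"
      by (intro sum_le_norm1_maxconv3 finite_prefix_sumset U)
    finally show ?thesis .
  qed
  ultimately show ?thesis by (simp add: mult.assoc)
qed

lemma beta'_level_bound:
  assumes id: "ident_distrib g h" and e: "0 < e"
  shows "beta' U * (\<Sum>x\<in>{x. e \<le> g x}. g x powr 2) powr (1/2) * (\<Sum>x\<in>{x. e \<le> h x}. h x powr 2) powr (1/2)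
    \<le> norm1 (maxconv (maxconv (indicator U) g) h)"
proof -
  obtain ys where ys: "distinct ys" "set ys = {x. e \<le> g x}" "sorted_wrt (\<lambda>x y. g y \<le> g x) ys"
    using decreasing_enumeration[OF finite_level_set[OF g e]] .
  obtain zs where zs: "distinct zs" "set zs = {x. e \<le> h x}" "sorted_wrt (\<lambda>x y. h y \<le> h x) zs"
    using decreasing_enumeration[OF finite_level_set[OF h e]] .
  note same = ident_distrib_sorted_eq[OF id e ys zs]
  show ?thesis
  proof (rule diagonal_level_bound[OF ys zs same beta'_nonneg])
    fix i assume "i < length ys"
    then show "beta' U * Suc i \<le> card (prefix_sumset ys zs U i i)"
      using beta'_mult_le_card[of "set (take (Suc i) ys)" "set (take (Suc i) zs)" U] same(1)
      by (simp add: prefix_sumset_def card_prefix ys(1) zs(1) take_eq_Nil flip: length_greater_0_conv)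
  qed
qed

end

lemma beta''_level_bound:
  fixes U :: "'a::ab_group_add set"
  assumes U: "finite U" and g: "admissible g" and e: "0 < e"
  shows "beta'' U * (\<Sum>x\<in>{x. e \<le> g x}. g x powr 2) powr (1/2) * (\<Sum>x\<in>{x. e \<le> g x}. g x powr 2) powr (1/2)
    \<le> norm1 (maxconv (maxconv (indicator U) g) g)"
proof -
  obtain ys where ys: "distinct ys" "set ys = {x. e \<le> g x}" "sorted_wrt (\<lambda>x y. g y \<le> g x) ys"
    using decreasing_enumeration[OF finite_level_set[OF g e]] .
  show ?thesis
  proof (rule diagonal_level_bound[OF U g g ys ys refl refl beta''_nonneg])
    fix i assume "i < length ys"
    then show "beta'' U * Suc i \<le> card (prefix_sumset ys ys U i i)"
      using beta''_mult_le_card[of "set (take (Suc i) ys)" U]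
      by (simp add: prefix_sumset_def card_prefix ys(1) take_eq_Nil flip: length_greater_0_conv)
  qed
qed

section \<open>Comparison of the set and function functionals\<close>

lemma conjugate_exponent:
  fixes p :: real
  assumes "1 < p"
  shows "1/p + 1/(p / (p - 1)) = 1" and "1 \<le> p / (p - 1)"
proof -
  have "1/(p / (p - 1)) = 1 - 1/p" using assms by (simp add: diff_divide_distrib)
  then show "1/p + 1/(p / (p - 1)) = 1" by simp
  show "1 \<le> p / (p - 1)" using assms by simp
qed

lemma beta_p_le_gamma_p:
  fixes U :: "'a::ab_group_add set"
  assumes U: "finite U" and p: "1 < p"
  shows "beta_p p U \<le> gamma_p p (indicator U)"
  unfolding gamma_p_def Let_def
proof (rule cInf_greatest)
  show "{norm1 (maxconv (maxconv (indicator U) g) h) / (lpnorm p g * lpnorm (p / (p - 1)) h) | g h.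
      admissible g \<and> admissible h} \<noteq> {}"
    using admissible_indicator[of "{0::'a}"] by blast
  fix y assume "y \<in> {norm1 (maxconv (maxconv (indicator U) g) h) / (lpnorm p g * lpnorm (p / (p - 1)) h) | g h.
      admissible g \<and> admissible h}"
  then obtain g h where g: "admissible g" and h: "admissible h"
    and y: "y = norm1 (maxconv (maxconv (indicator U) g) h) / (lpnorm p g * lpnorm (p / (p - 1)) h)"
    by blast
  have "beta_p p U * lpnorm p g * lpnorm (p / (p - 1)) h \<le> norm1 (maxconv (maxconv (indicator U) g) h)"
    by (rule lpnorm_mult_le_of_level_bounds[OF g h _ conjugate_exponent(2,1)[OF p] beta_p_nonneg])
       (use p beta_p_level_bound[OF U g h p conjugate_exponent(1)[OF p]] in auto)
  moreover have "0 < lpnorm p g * lpnorm (p / (p - 1)) h"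
    using lpnorm_pos[OF g] lpnorm_pos[OF h] conjugate_exponent[OF p] p by simp
  ultimately show "beta_p p U \<le> y" by (simp add: y pos_le_divide_eq mult.assoc)
qed

lemma gamma_p_le_beta_p:
  fixes U :: "'a::ab_group_add set"
  assumes U: "finite U" and p: "1 < p"
  shows "gamma_p p (indicator U) \<le> beta_p p U"
  unfolding beta_p_def
proof (rule cInf_greatest)
  show "{real (card (sumset (sumset A B) U)) / (real (card A) powr (1/p) * real (card B) powr (1 - 1/p)) | A B.
      finite A \<and> A \<noteq> {} \<and> finite B \<and> B \<noteq> {}} \<noteq> {}"
    by blast
  fix y assume "y \<in> {real (card (sumset (sumset A B) U)) / (real (card A) powr (1/p) * real (card B) powr (1 - 1/p)) | A B.
      finite A \<and> A \<noteq> {} \<and> finite B \<and> B \<noteq> {}}"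
  then obtain A B where AB: "finite A" "A \<noteq> {}" "finite B" "B \<noteq> {}"
    and y: "y = real (card (sumset (sumset A B) U)) / (real (card A) powr (1/p) * real (card B) powr (1 - 1/p))"
    by blast
  have "1 / (p / (p - 1)) = 1 - 1/p" using conjugate_exponent(1)[OF p] by simp
  then have "y = norm1 (maxconv (maxconv (indicator U) (indicator A)) (indicator B))
      / (lpnorm p (indicator A) * lpnorm (p / (p - 1)) (indicator B))"
    using U AB p by (simp add: y norm1_maxconv_indicators lpnorm_indicator)
  moreover have "gamma_p p (indicator U) \<le> norm1 (maxconv (maxconv (indicator U) (indicator A)) (indicator B))
      / (lpnorm p (indicator A) * lpnorm (p / (p - 1)) (indicator B))"
    unfolding gamma_p_def Let_def
    by (rule cInf_lower)
       (use admissible_indicator AB in blast,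
        auto intro!: bdd_belowI[where m = 0] divide_nonneg_nonneg norm1_maxconv3_nonneg[OF U] simp: lpnorm_nonneg)
  ultimately show "gamma_p p (indicator U) \<le> y" by simp
qed

lemma beta'_le_gamma':
  fixes U :: "'a::ab_group_add set"
  assumes U: "finite U"
  shows "beta' U \<le> gamma' (indicator U)"
  unfolding gamma'_def
proof (rule cInf_greatest)
  show "{norm1 (maxconv (maxconv (indicator U) g) h) / (lpnorm 2 g * lpnorm 2 h) | g h.
      admissible g \<and> admissible h \<and> ident_distrib g h} \<noteq> {}"
    using admissible_indicator[of "{0::'a}"] ident_distrib_indicator[of "{0::'a}" "{0}"] by blast
  fix y assume "y \<in> {norm1 (maxconv (maxconv (indicator U) g) h) / (lpnorm 2 g * lpnorm 2 h) | g h.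
      admissible g \<and> admissible h \<and> ident_distrib g h}"
  then obtain g h where g: "admissible g" and h: "admissible h" and id: "ident_distrib g h"
    and y: "y = norm1 (maxconv (maxconv (indicator U) g) h) / (lpnorm 2 g * lpnorm 2 h)"
    by blast
  have "beta' U * lpnorm 2 g * lpnorm 2 h \<le> norm1 (maxconv (maxconv (indicator U) g) h)"
    by (rule lpnorm_mult_le_of_level_bounds[OF g h _ _ _ beta'_nonneg])
       (use beta'_level_bound[OF U g h id] in auto)
  moreover have "0 < lpnorm 2 g * lpnorm 2 h" using lpnorm_pos[OF g] lpnorm_pos[OF h] by simp
  ultimately show "beta' U \<le> y" by (simp add: y pos_le_divide_eq mult.assoc)
qed

lemma gamma'_le_beta':
  fixes U :: "'a::ab_group_add set"
  assumes U: "finite U"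
  shows "gamma' (indicator U) \<le> beta' U"
  unfolding beta'_def
proof (rule cInf_greatest)
  show "{real (card (sumset (sumset A B) U)) / sqrt (real (card A) * real (card B)) | A B.
      finite A \<and> A \<noteq> {} \<and> finite B \<and> B \<noteq> {} \<and> card A = card B} \<noteq> {}"
    by blast
  fix y assume "y \<in> {real (card (sumset (sumset A B) U)) / sqrt (real (card A) * real (card B)) | A B.
      finite A \<and> A \<noteq> {} \<and> finite B \<and> B \<noteq> {} \<and> card A = card B}"
  then obtain A B where AB: "finite A" "A \<noteq> {}" "finite B" "B \<noteq> {}" "card A = card B"
    and y: "y = real (card (sumset (sumset A B) U)) / sqrt (real (card A) * real (card B))"
    by blast
  have "y = norm1 (maxconv (maxconv (indicator U) (indicator A)) (indicator B))
      / (lpnorm 2 (indicator A) * lpnorm 2 (indicator B))"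
    using U AB by (simp add: y norm1_maxconv_indicators lpnorm_indicator powr_half_sqrt real_sqrt_mult)
  moreover have "gamma' (indicator U) \<le> norm1 (maxconv (maxconv (indicator U) (indicator A)) (indicator B))
      / (lpnorm 2 (indicator A) * lpnorm 2 (indicator B))"
    unfolding gamma'_def
    by (rule cInf_lower)
       (use admissible_indicator ident_distrib_indicator AB in blast,
        auto intro!: bdd_belowI[where m = 0] divide_nonneg_nonneg norm1_maxconv3_nonneg[OF U] simp: lpnorm_nonneg)
  ultimately show "gamma' (indicator U) \<le> y" by simp
qed

lemma beta''_le_gamma'':
  fixes U :: "'a::ab_group_add set"
  assumes U: "finite U"
  shows "beta'' U \<le> gamma'' (indicator U)"
  unfolding gamma''_def
proof (rule cInf_greatest)
  show "{norm1 (maxconv (maxconv (indicator U) g) g) / (lpnorm 2 g)\<^sup>2 | g. admissible g} \<noteq> {}"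
    using admissible_indicator[of "{0::'a}"] by blast
  fix y assume "y \<in> {norm1 (maxconv (maxconv (indicator U) g) g) / (lpnorm 2 g)\<^sup>2 | g. admissible g}"
  then obtain g where g: "admissible g"
    and y: "y = norm1 (maxconv (maxconv (indicator U) g) g) / (lpnorm 2 g)\<^sup>2"
    by blast
  have "beta'' U * lpnorm 2 g * lpnorm 2 g \<le> norm1 (maxconv (maxconv (indicator U) g) g)"
    by (rule lpnorm_mult_le_of_level_bounds[OF g g _ _ _ beta''_nonneg])
       (use beta''_level_bound[OF U g] in auto)
  moreover have "0 < lpnorm 2 g" using lpnorm_pos[OF g] by simp
  ultimately show "beta'' U \<le> y" by (simp add: y pos_le_divide_eq power2_eq_square mult.assoc)
qed

lemma gamma''_le_beta'':
  fixes U :: "'a::ab_group_add set"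
  assumes U: "finite U"
  shows "gamma'' (indicator U) \<le> beta'' U"
  unfolding beta''_def
proof (rule cInf_greatest)
  show "{real (card (sumset (sumset A A) U)) / real (card A) | A. finite A \<and> A \<noteq> {}} \<noteq> {}"
    by blast
  fix y assume "y \<in> {real (card (sumset (sumset A A) U)) / real (card A) | A. finite A \<and> A \<noteq> {}}"
  then obtain A where A: "finite A" "A \<noteq> {}" and y: "y = real (card (sumset (sumset A A) U)) / real (card A)"
    by blast
  have "y = norm1 (maxconv (maxconv (indicator U) (indicator A)) (indicator A)) / (lpnorm 2 (indicator A))\<^sup>2"
    using U A by (simp add: y norm1_maxconv_indicators lpnorm_indicator powr_half_sqrt)
  moreover have "gamma'' (indicator U)
      \<le> norm1 (maxconv (maxconv (indicator U) (indicator A)) (indicator A)) / (lpnorm 2 (indicator A))\<^sup>2"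
    unfolding gamma''_def
    by (rule cInf_lower)
       (use admissible_indicator A in blast,
        auto intro!: bdd_belowI[where m = 0] divide_nonneg_nonneg norm1_maxconv3_nonneg[OF U])
  ultimately show "gamma'' (indicator U) \<le> y" by simp
qed

theorem mainTheorem9:
  fixes U :: "'a::ab_group_add set" and p :: real
  assumes "finite U" and "1 < p"
  shows "beta_p p U = gamma_p p (indicator U :: 'a \<Rightarrow> real)
       \<and> beta' U = gamma' (indicator U :: 'a \<Rightarrow> real)
       \<and> beta'' U = gamma'' (indicator U :: 'a \<Rightarrow> real)"
proof (intro conjI)
  show "beta_p p U = gamma_p p (indicator U)"
    using beta_p_le_gamma_p[OF assms] gamma_p_le_beta_p[OF assms] by (rule order_antisym)
  show "beta' U = gamma' (indicator U)"
    using beta'_le_gamma'[OF assms(1)] gamma'_le_beta'[OF assms(1)] by (rule order_antisym)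
  show "beta'' U = gamma'' (indicator U)"
    using beta''_le_gamma''[OF assms(1)] gamma''_le_beta''[OF assms(1)] by (rule order_antisym)
qed

end
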